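(* For every subdirectly irreducible state-morphism algebra $(\mathbf A,\tau)$ there is a subdirectly irreducible algebra $\mathbf B$ of the same type as $\mathbf A$ such that $(\mathbf A,\tau)$ is $\mathbf B$-subdiagonal, i.e. $(\mathbf A,\tau)$ embeds into $D(\mathbf B)=(\mathbf B\times\mathbf B,\tau_B)$.
   Context: Let $F$ be an arbitrary algebraic type. A state-morphism on an algebra $\mathbf A$ of type $F$ is an endomorphism $\tau:\mathbf A\to\mathbf A$ with $\tau\circ\tau=\tau$; $(\mathbf A,\tau)$, viewed as an algebra of type $F$ extended by the unary operation $\tau$, is a state-morphism algebra, and subdirect irreducibility of $(\mathbf A,\tau)$ refers to this extended algebra. For an algebra $\mathbf B$ of type $F$, $D(\mathbf B)=(\mathbf B\times\mathbf B,\tau_B)$ with $\tau_B(x,y)=(x,x)$ is the diagonal state-morphism algebra; an embedding of state-morphism algebras is an injective homomorphism of type $F$ commuting with the unary operations. *)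

theory Defs
  imports Main
begin

text \<open>An algebraic type F is given by a set of operation symbols (the type 'f)
  together with an arity function ar :: 'f => nat.  An algebra of type F is a
  carrier set with an interpretation of every symbol as a finitary operation
  (given on argument lists of the right length).\<close>

record ('f, 'a) alg =
  carrier :: "'a set"
  ops :: "'f \<Rightarrow> 'a list \<Rightarrow> 'a"

definition is_algebra :: "('f \<Rightarrow> nat) \<Rightarrow> ('f, 'a) alg \<Rightarrow> bool" where
  "is_algebra ar A \<longleftrightarrow>
     (\<forall>f xs. length xs = ar f \<and> set xs \<subseteq> carrier A \<longrightarrow> ops A f xs \<in> carrier A)"

definition is_hom :: "('f \<Rightarrow> nat) \<Rightarrow> ('f, 'a) alg \<Rightarrow> ('f, 'b) alg \<Rightarrow> ('a \<Rightarrow> 'b) \<Rightarrow> bool" where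
  "is_hom ar A B h \<longleftrightarrow>
     (\<forall>x\<in>carrier A. h x \<in> carrier B) \<and>
     (\<forall>f xs. length xs = ar f \<and> set xs \<subseteq> carrier A \<longrightarrow> h (ops A f xs) = ops B f (map h xs))"

definition is_embedding :: "('f \<Rightarrow> nat) \<Rightarrow> ('f, 'a) alg \<Rightarrow> ('f, 'b) alg \<Rightarrow> ('a \<Rightarrow> 'b) \<Rightarrow> bool" where
  "is_embedding ar A B h \<longleftrightarrow> is_hom ar A B h \<and> inj_on h (carrier A)"

definition is_congruence :: "('f \<Rightarrow> nat) \<Rightarrow> ('f, 'a) alg \<Rightarrow> ('a \<times> 'a) set \<Rightarrow> bool" where
  "is_congruence ar A \<theta> \<longleftrightarrow>
     equiv (carrier A) \<theta> \<and>
     (\<forall>f xs ys. length xs = ar f \<and> length ys = ar f \<and> list_all2 (\<lambda>x y. (x, y) \<in> \<theta>) xs ys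
        \<longrightarrow> (ops A f xs, ops A f ys) \<in> \<theta>)"

definition subdirectly_irreducible :: "('f \<Rightarrow> nat) \<Rightarrow> ('f, 'a) alg \<Rightarrow> bool" where
  "subdirectly_irreducible ar A \<longleftrightarrow>
     is_algebra ar A \<and>
     (\<exists>x\<in>carrier A. \<exists>y\<in>carrier A. x \<noteq> y) \<and>
     \<Inter>{\<theta>. is_congruence ar A \<theta> \<and> \<theta> \<noteq> Id_on (carrier A)} \<noteq> Id_on (carrier A)"

text \<open>The extended type F + tau: symbols 'f option, with None the new unary symbol.\<close>

definition ext_ar :: "('f \<Rightarrow> nat) \<Rightarrow> 'f option \<Rightarrow> nat" where
  "ext_ar ar = case_option 1 ar"

definition ext_alg :: "('f, 'a) alg \<Rightarrow> ('a \<Rightarrow> 'a) \<Rightarrow> ('f option, 'a) alg" where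
  "ext_alg A \<tau> = \<lparr> carrier = carrier A,
     ops = (\<lambda>g xs. case g of None \<Rightarrow> \<tau> (hd xs) | Some f \<Rightarrow> ops A f xs) \<rparr>"

definition is_state_morphism :: "('f \<Rightarrow> nat) \<Rightarrow> ('f, 'a) alg \<Rightarrow> ('a \<Rightarrow> 'a) \<Rightarrow> bool" where
  "is_state_morphism ar A \<tau> \<longleftrightarrow>
     is_hom ar A A \<tau> \<and> (\<forall>x\<in>carrier A. \<tau> (\<tau> x) = \<tau> x)"

definition state_morphism_algebra :: "('f \<Rightarrow> nat) \<Rightarrow> ('f, 'a) alg \<Rightarrow> ('a \<Rightarrow> 'a) \<Rightarrow> bool" where
  "state_morphism_algebra ar A \<tau> \<longleftrightarrow> is_algebra ar A \<and> is_state_morphism ar A \<tau>"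

definition square_alg :: "('f, 'b) alg \<Rightarrow> ('f, 'b \<times> 'b) alg" where
  "square_alg B = \<lparr> carrier = carrier B \<times> carrier B,
     ops = (\<lambda>f ps. (ops B f (map fst ps), ops B f (map snd ps))) \<rparr>"

definition diag_tau :: "'b \<times> 'b \<Rightarrow> 'b \<times> 'b" where
  "diag_tau p = (fst p, fst p)"

definition D_alg :: "('f, 'b) alg \<Rightarrow> ('f option, 'b \<times> 'b) alg" where
  "D_alg B = ext_alg (square_alg B) diag_tau"

end

theory Submission
  imports Defs
begin

text \<open>Let \<open>\<mu>\<close> be the monolith of \<open>(A, \<tau>)\<close> and \<open>(a, b) \<in> \<mu>\<close> with \<open>a \<noteq> b\<close>. By Zorn's lemma
  there is a congruence \<open>\<psi>\<close> of \<open>A\<close> maximal with respect to \<open>(a, b) \<notin> \<psi>\<close>, and then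
  \<open>B = A/\<psi>\<close> is subdirectly irreducible with monolith generated by \<open>([a], [b])\<close>.
  The relation \<open>\<psi> \<inter> \<tau>\<^sup>-\<^sup>1(\<psi>)\<close> is a congruence of \<open>(A, \<tau>)\<close> (here idempotency of \<open>\<tau>\<close> is used)
  that misses \<open>(a, b)\<close>, so it is the identity. Hence \<open>x \<mapsto> ([\<tau> x], [x])\<close> is injective, and it
  is a homomorphism into \<open>D(B)\<close> because \<open>\<tau>\<close> is an idempotent endomorphism.\<close>

subsection \<open>Congruences\<close>

lemma is_congruence_subset:
  "is_congruence ar A \<theta> \<Longrightarrow> \<theta> \<subseteq> carrier A \<times> carrier A"
  unfolding is_congruence_def equiv_def refl_on_def by blast

lemma list_all2_subset_carrier:
  assumes "\<theta> \<subseteq> carrier A \<times> carrier A" "list_all2 (\<lambda>x y. (x, y) \<in> \<theta>) xs ys"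
  shows "set xs \<subseteq> carrier A \<and> set ys \<subseteq> carrier A"
  using assms(2,1) by (induct xs ys rule: list_all2_induct) auto

lemma is_congruence_full:
  assumes "is_algebra ar A"
  shows "is_congruence ar A (carrier A \<times> carrier A)"
proof -
  have "(ops A f xs, ops A f ys) \<in> carrier A \<times> carrier A"
    if "length xs = ar f" "length ys = ar f"
       "list_all2 (\<lambda>x y. (x, y) \<in> carrier A \<times> carrier A) xs ys" for f xs ys
    using that list_all2_subset_carrier[OF subset_refl that(3)] assms
    by (simp add: is_algebra_def)
  then show ?thesis
    unfolding is_congruence_def by (auto simp: equiv_def refl_on_def sym_def trans_def)
qed

lemma is_congruence_Id_on:
  assumes "is_algebra ar A"
  shows "is_congruence ar A (Id_on (carrier A))"
proof -
  have "xs = ys \<and> set xs \<subseteq> carrier A"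
    if "list_all2 (\<lambda>x y. (x, y) \<in> Id_on (carrier A)) xs ys" for xs ys
    using that by (induct xs ys rule: list_all2_induct) auto
  then show ?thesis
    using assms unfolding is_congruence_def is_algebra_def
    by (auto simp: equiv_def refl_on_def sym_def trans_def) (metis Id_onI)
qed

lemma is_congruence_Int:
  assumes "is_congruence ar A \<theta>" "is_congruence ar A \<phi>"
  shows "is_congruence ar A (\<theta> \<inter> \<phi>)"
proof -
  have "equiv (carrier A) (\<theta> \<inter> \<phi>)"
    using assms unfolding is_congruence_def equiv_def refl_on_def sym_def trans_def by blast
  moreover have "(ops A f xs, ops A f ys) \<in> \<theta> \<inter> \<phi>"
    if "length xs = ar f" "length ys = ar f" "list_all2 (\<lambda>x y. (x, y) \<in> \<theta> \<inter> \<phi>) xs ys"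
    for f xs ys
  proof -
    have "list_all2 (\<lambda>x y. (x, y) \<in> \<theta>) xs ys" "list_all2 (\<lambda>x y. (x, y) \<in> \<phi>) xs ys"
      using that(3) by (auto elim: list_all2_mono)
    then show ?thesis using assms that(1,2) by (simp add: is_congruence_def)
  qed
  ultimately show ?thesis unfolding is_congruence_def by blast
qed

lemma is_congruence_inv_image:
  assumes A: "is_algebra ar A" and h: "is_hom ar A B h" and \<Theta>: "is_congruence ar B \<Theta>"
  shows "is_congruence ar A (inv_image \<Theta> h \<inter> carrier A \<times> carrier A)"
    (is "is_congruence ar A ?\<phi>")
proof -
  have eq\<Theta>: "equiv (carrier B) \<Theta>" using \<Theta> by (simp add: is_congruence_def)
  have hc: "\<And>x. x \<in> carrier A \<Longrightarrow> h x \<in> carrier B" using h by (simp add: is_hom_def)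
  have "equiv (carrier A) ?\<phi>"
    using eq\<Theta> hc unfolding equiv_def refl_on_def sym_def trans_def inv_image_def by blast
  moreover have "(ops A f xs, ops A f ys) \<in> ?\<phi>"
    if l: "length xs = ar f" "length ys = ar f" "list_all2 (\<lambda>x y. (x, y) \<in> ?\<phi>) xs ys"
    for f xs ys
  proof -
    have s: "set xs \<subseteq> carrier A" "set ys \<subseteq> carrier A"
      using list_all2_subset_carrier[OF _ l(3)] by auto
    have "list_all2 (\<lambda>x y. (x, y) \<in> \<Theta>) (map h xs) (map h ys)"
      using l(3) unfolding list_all2_map1 list_all2_map2 by (rule list_all2_mono) auto
    then have "(ops B f (map h xs), ops B f (map h ys)) \<in> \<Theta>"
      using \<Theta> l by (simp add: is_congruence_def)
    moreover have "h (ops A f xs) = ops B f (map h xs)" "h (ops A f ys) = ops B f (map h ys)"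
      using h l s unfolding is_hom_def by blast+
    moreover have "ops A f xs \<in> carrier A" "ops A f ys \<in> carrier A"
      using A l s unfolding is_algebra_def by blast+
    ultimately show ?thesis by simp
  qed
  ultimately show ?thesis unfolding is_congruence_def by blast
qed

lemma is_congruence_Union_chain:
  assumes C: "C \<in> chains {\<theta>. is_congruence ar A \<theta> \<and> (a, b) \<notin> \<theta>}" and "C \<noteq> {}"
  shows "is_congruence ar A (\<Union>C) \<and> (a, b) \<notin> \<Union>C"
proof -
  have congs: "\<And>\<theta>. \<theta> \<in> C \<Longrightarrow> is_congruence ar A \<theta> \<and> (a, b) \<notin> \<theta>"
    using C by (auto simp: chains_def)
  then have eqs: "\<And>\<theta>. \<theta> \<in> C \<Longrightarrow> equiv (carrier A) \<theta>" by (simp add: is_congruence_def)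
  have ch: "subset.chain UNIV C" using C by (auto simp: chains_def chain_subset_alt_def)
  have "equiv (carrier A) (\<Union>C)"
  proof (rule equivI)
    show "\<Union>C \<subseteq> carrier A \<times> carrier A" using eqs by (auto simp: equiv_def)
    show "refl_on (carrier A) (\<Union>C)" using eqs \<open>C \<noteq> {}\<close> by (auto simp: equiv_def refl_on_def)
    show "sym (\<Union>C)" using eqs unfolding sym_def equiv_def by blast
    show "trans (\<Union>C)" unfolding trans_def
    proof (intro allI impI)
      fix x y z assume "(x, y) \<in> \<Union>C" "(y, z) \<in> \<Union>C"
      then obtain \<theta>\<^sub>1 \<theta>\<^sub>2 where "\<theta>\<^sub>1 \<in> C" "\<theta>\<^sub>2 \<in> C" "(x, y) \<in> \<theta>\<^sub>1" "(y, z) \<in> \<theta>\<^sub>2"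
        by auto
      moreover have "\<theta>\<^sub>1 \<subseteq> \<theta>\<^sub>2 \<or> \<theta>\<^sub>2 \<subseteq> \<theta>\<^sub>1"
        using ch \<open>\<theta>\<^sub>1 \<in> C\<close> \<open>\<theta>\<^sub>2 \<in> C\<close> by (auto simp: subset.chain_def)
      ultimately show "(x, z) \<in> \<Union>C" using eqs unfolding equiv_def trans_def by blast
    qed
  qed
  moreover have "(ops A f xs, ops A f ys) \<in> \<Union>C"
    if l: "length xs = ar f" "length ys = ar f" "list_all2 (\<lambda>x y. (x, y) \<in> \<Union>C) xs ys"
    for f xs ys
  proof -
    \<comment> \<open>the finitely many related argument pairs already lie in a single member of the chain\<close>
    have "set (zip xs ys) \<subseteq> \<Union>C" using l(3) by (auto simp: list_all2_iff)
    then obtain \<theta> where \<theta>: "\<theta> \<in> C" "set (zip xs ys) \<subseteq> \<theta>"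
      using finite_subset_Union_chain[OF finite_set _ \<open>C \<noteq> {}\<close> ch] by blast
    then have "list_all2 (\<lambda>x y. (x, y) \<in> \<theta>) xs ys" using l(3) by (auto simp: list_all2_iff)
    then show ?thesis using congs[OF \<theta>(1)] l \<theta>(1) by (auto simp: is_congruence_def)
  qed
  ultimately show ?thesis using congs unfolding is_congruence_def by blast
qed

lemma exists_maximal_congruence_avoiding:
  assumes "is_algebra ar A" "a \<noteq> b"
  obtains \<psi> where "is_congruence ar A \<psi>" "(a, b) \<notin> \<psi>"
    "\<And>\<theta>. is_congruence ar A \<theta> \<Longrightarrow> (a, b) \<notin> \<theta> \<Longrightarrow> \<psi> \<subseteq> \<theta> \<Longrightarrow> \<theta> = \<psi>"
proof -
  let ?S = "{\<theta>. is_congruence ar A \<theta> \<and> (a, b) \<notin> \<theta>}"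
  have "\<exists>U\<in>?S. \<forall>\<theta>\<in>C. \<theta> \<subseteq> U" if "C \<in> chains ?S" for C
  proof (cases "C = {}")
    case True
    then show ?thesis using is_congruence_Id_on[OF assms(1)] assms(2) by auto
  next
    case False
    then show ?thesis using is_congruence_Union_chain[OF that False] by blast
  qed
  then obtain \<psi> where "\<psi> \<in> ?S" "\<forall>\<theta>\<in>?S. \<psi> \<subseteq> \<theta> \<longrightarrow> \<theta> = \<psi>"
    using Zorn_Lemma2[of ?S] by blast
  then show ?thesis using that by blast
qed

subsection \<open>Quotient algebras\<close>

text \<open>Operations act on arbitrary representatives; for a congruence the choice is irrelevant.\<close>

definition quot_alg :: "('f, 'a) alg \<Rightarrow> ('a \<times> 'a) set \<Rightarrow> ('f, 'a set) alg" where
  "quot_alg A \<psi> = \<lparr>carrier = carrier A // \<psi>,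
     ops = (\<lambda>f Xs. \<psi> `` {ops A f (map (\<lambda>X. SOME x. x \<in> X) Xs)})\<rparr>"

lemma is_hom_quot_alg:
  assumes "is_congruence ar A \<psi>"
  shows "is_hom ar A (quot_alg A \<psi>) (\<lambda>x. \<psi> `` {x})"
  unfolding is_hom_def
proof (intro conjI allI impI ballI)
  have eq: "equiv (carrier A) \<psi>" using assms by (simp add: is_congruence_def)
  show "\<psi> `` {x} \<in> carrier (quot_alg A \<psi>)" if "x \<in> carrier A" for x
    using that by (simp add: quot_alg_def quotientI)
  fix f xs
  assume l: "length xs = ar f \<and> set xs \<subseteq> carrier A"
  let ?ys = "map (\<lambda>x. SOME y. y \<in> \<psi> `` {x}) xs"
  have "list_all2 (\<lambda>x y. (x, y) \<in> \<psi>) xs ?ys"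
  proof (rule list_all2_all_nthI)
    fix n assume n: "n < length xs"
    then have "xs ! n \<in> carrier A" using l by auto
    then have "xs ! n \<in> \<psi> `` {xs ! n}" using eq by (auto simp: equiv_def refl_on_def)
    then have "(SOME y. y \<in> \<psi> `` {xs ! n}) \<in> \<psi> `` {xs ! n}" by (rule someI)
    then show "(xs ! n, ?ys ! n) \<in> \<psi>" using n by simp
  qed simp
  then have "(ops A f xs, ops A f ?ys) \<in> \<psi>" using assms l by (simp add: is_congruence_def)
  then have "\<psi> `` {ops A f xs} = \<psi> `` {ops A f ?ys}" by (rule equiv_class_eq[OF eq])
  then show "\<psi> `` {ops A f xs} = ops (quot_alg A \<psi>) f (map (\<lambda>x. \<psi> `` {x}) xs)"
    by (simp add: quot_alg_def o_def)
qed

lemma is_algebra_quot_alg: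
  assumes A: "is_algebra ar A" and \<psi>: "is_congruence ar A \<psi>"
  shows "is_algebra ar (quot_alg A \<psi>)"
  unfolding is_algebra_def
proof (intro allI impI)
  have eq: "equiv (carrier A) \<psi>" using \<psi> by (simp add: is_congruence_def)
  fix f Xs
  assume l: "length Xs = ar f \<and> set Xs \<subseteq> carrier (quot_alg A \<psi>)"
  have "(SOME x. x \<in> X) \<in> carrier A" if "X \<in> set Xs" for X
  proof -
    have "X \<in> carrier A // \<psi>" using that l by (auto simp: quot_alg_def)
    then obtain z where "z \<in> carrier A" "X = \<psi> `` {z}" by (rule quotientE)
    moreover from this have "z \<in> X" using eq by (auto simp: equiv_def refl_on_def)
    ultimately show ?thesis using eq by (metis someI in_quotient_imp_subset quotientI subsetD)
  qed
  then have "set (map (\<lambda>X. SOME x. x \<in> X) Xs) \<subseteq> carrier A" by auto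
  then have "ops A f (map (\<lambda>X. SOME x. x \<in> X) Xs) \<in> carrier A"
    using A l by (simp add: is_algebra_def)
  then show "ops (quot_alg A \<psi>) f Xs \<in> carrier (quot_alg A \<psi>)"
    by (simp add: quot_alg_def quotientI)
qed

subsection \<open>Subdirect irreducibility\<close>

lemma subdirectly_irreducibleI:
  assumes "is_algebra ar A" "a \<in> carrier A" "b \<in> carrier A" "a \<noteq> b"
    and "\<And>\<theta>. is_congruence ar A \<theta> \<Longrightarrow> \<theta> \<noteq> Id_on (carrier A) \<Longrightarrow> (a, b) \<in> \<theta>"
  shows "subdirectly_irreducible ar A"
proof -
  have "(a, b) \<in> \<Inter>{\<theta>. is_congruence ar A \<theta> \<and> \<theta> \<noteq> Id_on (carrier A)}"
    using assms(5) by blast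
  moreover have "(a, b) \<notin> Id_on (carrier A)" using assms(4) by blast
  ultimately show ?thesis using assms(1-4) unfolding subdirectly_irreducible_def by blast
qed

lemma subdirectly_irreducibleE:
  assumes "subdirectly_irreducible ar A"
  obtains a b where "a \<in> carrier A" "b \<in> carrier A" "a \<noteq> b"
    "\<And>\<theta>. is_congruence ar A \<theta> \<Longrightarrow> \<theta> \<noteq> Id_on (carrier A) \<Longrightarrow> (a, b) \<in> \<theta>"
proof -
  let ?\<mu> = "\<Inter>{\<theta>. is_congruence ar A \<theta> \<and> \<theta> \<noteq> Id_on (carrier A)}"
  have alg: "is_algebra ar A" and \<mu>: "?\<mu> \<noteq> Id_on (carrier A)"
    and nontriv: "\<exists>x\<in>carrier A. \<exists>y\<in>carrier A. x \<noteq> y"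
    using assms by (auto simp: subdirectly_irreducible_def)
  have "carrier A \<times> carrier A \<noteq> Id_on (carrier A)" using nontriv by blast
  then have "?\<mu> \<subseteq> carrier A \<times> carrier A"
    using is_congruence_full[OF alg] by (intro Inter_lower) simp
  moreover have "Id_on (carrier A) \<subseteq> ?\<mu>"
    by (auto simp: is_congruence_def equiv_def refl_on_def)
  ultimately obtain p where "p \<in> ?\<mu>" "p \<notin> Id_on (carrier A)" "p \<in> carrier A \<times> carrier A"
    using \<mu> by blast
  then obtain a b where "(a, b) \<in> ?\<mu>" "a \<noteq> b" "a \<in> carrier A" "b \<in> carrier A"
    by (cases p) auto
  then show ?thesis using that by blast
qed

lemma subdirectly_irreducible_quot_alg_maximal:
  assumes A: "is_algebra ar A" and \<psi>: "is_congruence ar A \<psi>"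
    and ab: "a \<in> carrier A" "b \<in> carrier A" "(a, b) \<notin> \<psi>"
    and max: "\<And>\<theta>. is_congruence ar A \<theta> \<Longrightarrow> (a, b) \<notin> \<theta> \<Longrightarrow> \<psi> \<subseteq> \<theta> \<Longrightarrow> \<theta> = \<psi>"
  shows "subdirectly_irreducible ar (quot_alg A \<psi>)"
proof -
  let ?B = "quot_alg A \<psi>" and ?g = "\<lambda>x. \<psi> `` {x}"
  have eq: "equiv (carrier A) \<psi>" using \<psi> by (simp add: is_congruence_def)
  have class_eq: "\<And>x y. x \<in> carrier A \<Longrightarrow> y \<in> carrier A \<Longrightarrow> ?g x = ?g y \<longleftrightarrow> (x, y) \<in> \<psi>"
    using eq by (simp add: eq_equiv_class_iff)
  have g: "is_hom ar A ?B ?g" by (rule is_hom_quot_alg[OF \<psi>])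
  have "(?g a, ?g b) \<in> \<Theta>" if \<Theta>: "is_congruence ar ?B \<Theta>" "\<Theta> \<noteq> Id_on (carrier ?B)" for \<Theta>
  proof -
    let ?\<phi> = "inv_image \<Theta> ?g \<inter> carrier A \<times> carrier A"
    have \<phi>: "is_congruence ar A ?\<phi>" by (rule is_congruence_inv_image[OF A g \<Theta>(1)])
    have eq\<Theta>: "equiv (carrier ?B) \<Theta>" using \<Theta>(1) by (simp add: is_congruence_def)
    have "\<psi> \<subseteq> ?\<phi>"
    proof
      fix p assume "p \<in> \<psi>"
      moreover obtain x y where "p = (x, y)" by (cases p)
      ultimately have "(x, y) \<in> \<psi>" by simp
      then have "x \<in> carrier A" "y \<in> carrier A" "?g x = ?g y"
        using is_congruence_subset[OF \<psi>] equiv_class_eq[OF eq] by auto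
      then show "p \<in> ?\<phi>"
        using \<open>p = (x, y)\<close> eq\<Theta> by (auto simp: equiv_def refl_on_def quot_alg_def quotientI)
    qed
    moreover have "?\<phi> \<noteq> \<psi>"
    proof -
      obtain X Y where XY: "(X, Y) \<in> \<Theta>" "X \<noteq> Y"
        using \<Theta>(2) eq\<Theta> by (auto simp: equiv_def refl_on_def)
      then have "X \<in> carrier A // \<psi>" "Y \<in> carrier A // \<psi>"
        using eq\<Theta> by (auto simp: equiv_def refl_on_def quot_alg_def)
      then obtain x y where "x \<in> carrier A" "X = ?g x" "y \<in> carrier A" "Y = ?g y"
        by (auto elim!: quotientE)
      with XY class_eq show ?thesis by auto
    qed
    ultimately have "(a, b) \<in> ?\<phi>" using max[OF \<phi>] by blast
    then show ?thesis by simp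
  qed
  moreover have "?g a \<in> carrier ?B" "?g b \<in> carrier ?B" "?g a \<noteq> ?g b"
    using ab class_eq by (auto simp: quot_alg_def quotientI)
  ultimately show ?thesis
    using subdirectly_irreducibleI[OF is_algebra_quot_alg[OF A \<psi>]] by blast
qed

subsection \<open>State-morphism algebras\<close>

lemma is_congruence_ext_alg_iff:
  "is_congruence (ext_ar ar) (ext_alg A \<tau>) \<theta> \<longleftrightarrow>
   is_congruence ar A \<theta> \<and> (\<forall>x y. (x, y) \<in> \<theta> \<longrightarrow> (\<tau> x, \<tau> y) \<in> \<theta>)"
proof
  assume c: "is_congruence (ext_ar ar) (ext_alg A \<tau>) \<theta>"
  then have "equiv (carrier A) \<theta>"
    and compat: "\<And>g xs ys. length xs = ext_ar ar g \<Longrightarrow> length ys = ext_ar ar g \<Longrightarrow>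
      list_all2 (\<lambda>x y. (x, y) \<in> \<theta>) xs ys \<Longrightarrow>
      (ops (ext_alg A \<tau>) g xs, ops (ext_alg A \<tau>) g ys) \<in> \<theta>"
    by (simp_all add: is_congruence_def ext_alg_def)
  moreover have "(ops A f xs, ops A f ys) \<in> \<theta>"
    if "length xs = ar f" "length ys = ar f" "list_all2 (\<lambda>x y. (x, y) \<in> \<theta>) xs ys" for f xs ys
    using compat[of xs "Some f" ys] that by (simp add: ext_ar_def ext_alg_def)
  moreover have "(\<tau> x, \<tau> y) \<in> \<theta>" if "(x, y) \<in> \<theta>" for x y
    using compat[of "[x]" None "[y]"] that by (simp add: ext_ar_def ext_alg_def)
  ultimately show "is_congruence ar A \<theta> \<and> (\<forall>x y. (x, y) \<in> \<theta> \<longrightarrow> (\<tau> x, \<tau> y) \<in> \<theta>)"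
    by (simp add: is_congruence_def)
next
  assume c: "is_congruence ar A \<theta> \<and> (\<forall>x y. (x, y) \<in> \<theta> \<longrightarrow> (\<tau> x, \<tau> y) \<in> \<theta>)"
  have "(ops (ext_alg A \<tau>) g xs, ops (ext_alg A \<tau>) g ys) \<in> \<theta>"
    if l: "length xs = ext_ar ar g" "length ys = ext_ar ar g" "list_all2 (\<lambda>x y. (x, y) \<in> \<theta>) xs ys"
    for g xs ys
  proof (cases g)
    case None
    then obtain x y where "xs = [x]" "ys = [y]" using l by (auto simp: ext_ar_def length_Suc_conv)
    then show ?thesis using None l c by (simp add: ext_alg_def)
  next
    case (Some f)
    then show ?thesis using l c by (simp add: ext_alg_def ext_ar_def is_congruence_def)
  qed
  then show "is_congruence (ext_ar ar) (ext_alg A \<tau>) \<theta>"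
    using c by (simp add: is_congruence_def ext_alg_def)
qed

lemma is_congruence_ext_alg_Int_inv_image:
  assumes sm: "state_morphism_algebra ar A \<tau>" and \<psi>: "is_congruence ar A \<psi>"
  shows "is_congruence (ext_ar ar) (ext_alg A \<tau>) (\<psi> \<inter> (inv_image \<psi> \<tau> \<inter> carrier A \<times> carrier A))"
proof -
  have A: "is_algebra ar A" and \<tau>: "is_hom ar A A \<tau>"
    and idem: "\<And>x. x \<in> carrier A \<Longrightarrow> \<tau> (\<tau> x) = \<tau> x"
    using sm by (auto simp: state_morphism_algebra_def is_state_morphism_def)
  have "(\<tau> x, \<tau> y) \<in> carrier A \<times> carrier A" if "x \<in> carrier A" "y \<in> carrier A" for x y
    using \<tau> that by (simp add: is_hom_def)
  then show ?thesis
    using is_congruence_Int[OF \<psi> is_congruence_inv_image[OF A \<tau> \<psi>]] idem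
    by (auto simp: is_congruence_ext_alg_iff)
qed

lemma is_embedding_D_alg_quot_alg:
  assumes sm: "state_morphism_algebra ar A \<tau>" and \<psi>: "is_congruence ar A \<psi>"
    and sep: "\<And>x y. (x, y) \<in> \<psi> \<Longrightarrow> (\<tau> x, \<tau> y) \<in> \<psi> \<Longrightarrow> x = y"
  shows "is_embedding (ext_ar ar) (ext_alg A \<tau>) (D_alg (quot_alg A \<psi>)) (\<lambda>x. (\<psi> `` {\<tau> x}, \<psi> `` {x}))"
    (is "is_embedding _ _ _ ?h")
  unfolding is_embedding_def is_hom_def
proof (intro conjI ballI allI impI)
  let ?B = "quot_alg A \<psi>" and ?g = "\<lambda>x. \<psi> `` {x}"
  have \<tau>: "is_hom ar A A \<tau>" and idem: "\<And>x. x \<in> carrier A \<Longrightarrow> \<tau> (\<tau> x) = \<tau> x"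
    using sm by (auto simp: state_morphism_algebra_def is_state_morphism_def)
  have \<tau>c: "\<And>x. x \<in> carrier A \<Longrightarrow> \<tau> x \<in> carrier A" using \<tau> by (simp add: is_hom_def)
  have g: "is_hom ar A ?B ?g" by (rule is_hom_quot_alg[OF \<psi>])
  have eq: "equiv (carrier A) \<psi>" using \<psi> by (simp add: is_congruence_def)
  show "?h x \<in> carrier (D_alg ?B)" if "x \<in> carrier (ext_alg A \<tau>)" for x
    using that g \<tau>c by (simp add: is_hom_def D_alg_def ext_alg_def square_alg_def)
  show "?h (ops (ext_alg A \<tau>) G xs) = ops (D_alg ?B) G (map ?h xs)"
    if l: "length xs = ext_ar ar G \<and> set xs \<subseteq> carrier (ext_alg A \<tau>)" for G xs
  proof (cases G)
    case None
    then obtain x where "xs = [x]" "x \<in> carrier A"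
      using l by (auto simp: ext_ar_def ext_alg_def length_Suc_conv)
    then show ?thesis using None idem by (simp add: ext_alg_def D_alg_def diag_tau_def)
  next
    case (Some f)
    then have lf: "length xs = ar f" "set xs \<subseteq> carrier A"
      using l by (auto simp: ext_ar_def ext_alg_def)
    then have "set (map \<tau> xs) \<subseteq> carrier A" using \<tau>c by auto
    then have "?g (ops A f xs) = ops ?B f (map ?g xs)"
      "?g (ops A f (map \<tau> xs)) = ops ?B f (map ?g (map \<tau> xs))"
      "\<tau> (ops A f xs) = ops A f (map \<tau> xs)"
      using g \<tau> lf unfolding is_hom_def by auto
    then show ?thesis
      using Some by (simp add: ext_alg_def D_alg_def square_alg_def o_def)
  qed
  show "inj_on ?h (carrier (ext_alg A \<tau>))"
  proof (rule inj_onI)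
    fix x y assume "x \<in> carrier (ext_alg A \<tau>)" "y \<in> carrier (ext_alg A \<tau>)" "?h x = ?h y"
    then have "(x, y) \<in> \<psi>" "(\<tau> x, \<tau> y) \<in> \<psi>"
      using \<tau>c eq by (auto simp: ext_alg_def eq_equiv_class_iff)
    then show "x = y" by (rule sep)
  qed
qed

theorem theorem3p7:
  fixes ar :: "'f \<Rightarrow> nat" and A :: "('f, 'a) alg" and \<tau> :: "'a \<Rightarrow> 'a"
  assumes "state_morphism_algebra ar A \<tau>"
    and "subdirectly_irreducible (ext_ar ar) (ext_alg A \<tau>)"
  shows "\<exists>(B :: ('f, 'a set) alg) h.
           subdirectly_irreducible ar B \<and>
           is_embedding (ext_ar ar) (ext_alg A \<tau>) (D_alg B) h"
proof -
  have A: "is_algebra ar A" using assms(1) by (simp add: state_morphism_algebra_def)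
  obtain a b where ab: "a \<in> carrier A" "b \<in> carrier A" "a \<noteq> b"
    and monolith: "\<And>\<theta>. is_congruence (ext_ar ar) (ext_alg A \<tau>) \<theta> \<Longrightarrow>
      \<theta> \<noteq> Id_on (carrier A) \<Longrightarrow> (a, b) \<in> \<theta>"
    using subdirectly_irreducibleE[OF assms(2)] by (metis alg.select_convs(1) ext_alg_def)
  obtain \<psi> where \<psi>: "is_congruence ar A \<psi>" "(a, b) \<notin> \<psi>"
    and max: "\<And>\<theta>. is_congruence ar A \<theta> \<Longrightarrow> (a, b) \<notin> \<theta> \<Longrightarrow> \<psi> \<subseteq> \<theta> \<Longrightarrow> \<theta> = \<psi>"
    using exists_maximal_congruence_avoiding[OF A ab(3)] by blast
  have trivial: "\<psi> \<inter> (inv_image \<psi> \<tau> \<inter> carrier A \<times> carrier A) = Id_on (carrier A)"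
    using monolith[OF is_congruence_ext_alg_Int_inv_image[OF assms(1) \<psi>(1)]] \<psi>(2) by blast
  have "x = y" if "(x, y) \<in> \<psi>" "(\<tau> x, \<tau> y) \<in> \<psi>" for x y
  proof -
    have "(x, y) \<in> \<psi> \<inter> (inv_image \<psi> \<tau> \<inter> carrier A \<times> carrier A)"
      using that is_congruence_subset[OF \<psi>(1)] by auto
    then show ?thesis unfolding trivial by blast
  qed
  then show ?thesis
    using subdirectly_irreducible_quot_alg_maximal[OF A \<psi>(1) ab(1,2) \<psi>(2) max]
      is_embedding_D_alg_quot_alg[OF assms(1) \<psi>(1)] by blast
qed

end
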